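(* Let $M_1$ and $M_2$ be matroids on a finite set $E$ with rank functions $r_1,r_2$, and let $G$ be their mixing graph. If $A,B\in\mathscr{X}$ and $|A\triangle B|\le2$, then $G$ contains a path from $A$ to $B$.
   Context: Let $\mathscr{X}=\{A\subseteq E: r_1(A)\ne r_2(A)\}$. The mixing graph $G=G_{M_1,M_2}$ has vertex set $\mathscr{X}$, and $AB$ is an edge iff either (i) $A\subsetneq B$ or $B\subsetneq A$, or (ii) $A\cap B\notin\mathscr{X}$, $A\cup B\notin\mathscr{X}$, and $|A\triangle B|=2$. Here $\triangle$ denotes symmetric difference. *)

theory Defs
  imports Main
begin

definition matroid_rank :: "'a set \<Rightarrow> ('a set \<Rightarrow> nat) \<Rightarrow> bool" where
  "matroid_rank E r \<longleftrightarrow> finite E \<and>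
     (\<forall>A. A \<subseteq> E \<longrightarrow> r A \<le> card A) \<and>
     (\<forall>A B. A \<subseteq> B \<and> B \<subseteq> E \<longrightarrow> r A \<le> r B) \<and>
     (\<forall>A B. A \<subseteq> E \<and> B \<subseteq> E \<longrightarrow> r (A \<union> B) + r (A \<inter> B) \<le> r A + r B)"

definition mix_X :: "'a set \<Rightarrow> ('a set \<Rightarrow> nat) \<Rightarrow> ('a set \<Rightarrow> nat) \<Rightarrow> 'a set set" where
  "mix_X E r1 r2 = {A. A \<subseteq> E \<and> r1 A \<noteq> r2 A}"

definition mix_edge :: "'a set \<Rightarrow> ('a set \<Rightarrow> nat) \<Rightarrow> ('a set \<Rightarrow> nat) \<Rightarrow> 'a set \<Rightarrow> 'a set \<Rightarrow> bool" where
  "mix_edge E r1 r2 A B \<longleftrightarrow> A \<in> mix_X E r1 r2 \<and> B \<in> mix_X E r1 r2 \<and>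
     (A \<subset> B \<or> B \<subset> A \<or>
      (A \<inter> B \<notin> mix_X E r1 r2 \<and> A \<union> B \<notin> mix_X E r1 r2 \<and> card ((A - B) \<union> (B - A)) = 2))"

definition mix_path :: "'a set \<Rightarrow> ('a set \<Rightarrow> nat) \<Rightarrow> ('a set \<Rightarrow> nat) \<Rightarrow> 'a set list \<Rightarrow> 'a set \<Rightarrow> 'a set \<Rightarrow> bool" where
  "mix_path E r1 r2 P A B \<longleftrightarrow> P \<noteq> [] \<and> hd P = A \<and> last P = B \<and> distinct P \<and>
     set P \<subseteq> mix_X E r1 r2 \<and>
     (\<forall>i. Suc i < length P \<longrightarrow> mix_edge E r1 r2 (P ! i) (P ! Suc i))"

end

theory Submission
  imports Defs
begin

text \<open>If A and B are comparable they are adjacent. Otherwise A and B differ in exactly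
  one element on each side; if A \<inter> B or A \<union> B lies in \<X>, it is a common neighbour
  (a proper subset, resp. superset, of both), and if neither does, A and B are adjacent
  by the second clause of the edge relation.\<close>

lemma mix_edge_imp_neq: "mix_edge E r1 r2 A B \<Longrightarrow> A \<noteq> B"
  by (auto simp: mix_edge_def)

lemma mix_edge_psubset:
  "A \<in> mix_X E r1 r2 \<Longrightarrow> B \<in> mix_X E r1 r2 \<Longrightarrow> A \<subset> B \<Longrightarrow> mix_edge E r1 r2 A B"
  "A \<in> mix_X E r1 r2 \<Longrightarrow> B \<in> mix_X E r1 r2 \<Longrightarrow> B \<subset> A \<Longrightarrow> mix_edge E r1 r2 A B"
  by (simp_all add: mix_edge_def)

lemma mix_path_singleton: "A \<in> mix_X E r1 r2 \<Longrightarrow> mix_path E r1 r2 [A] A A"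
  by (simp add: mix_path_def)

lemma mix_path_edge: "mix_edge E r1 r2 A B \<Longrightarrow> mix_path E r1 r2 [A, B] A B"
  by (auto simp: mix_path_def less_Suc_eq mix_edge_imp_neq) (simp_all add: mix_edge_def)

lemma mix_path_two_edges:
  assumes "A \<noteq> B" "mix_edge E r1 r2 A C" "mix_edge E r1 r2 C B"
  shows "mix_path E r1 r2 [A, C, B] A B"
proof -
  have "A \<noteq> C" "C \<noteq> B" using assms(2,3) by (auto dest: mix_edge_imp_neq)
  moreover have "set [A, C, B] \<subseteq> mix_X E r1 r2" using assms(2,3) by (auto simp: mix_edge_def)
  moreover have "mix_edge E r1 r2 ([A, C, B] ! i) ([A, C, B] ! Suc i)"
    if "Suc i < length [A, C, B]" for i
    using that assms(2,3) by (auto simp: less_Suc_eq)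
  ultimately show ?thesis using assms(1) by (auto simp: mix_path_def)
qed

lemma card_symdiff_eq_2:
  assumes "finite (sym_diff A B)" "card (sym_diff A B) \<le> 2"
    and "x \<in> A - B" "y \<in> B - A"
  shows "card (sym_diff A B) = 2"
proof -
  have "card {x, y} \<le> card (sym_diff A B)"
    using assms(1,3,4) by (intro card_mono) auto
  moreover have "card {x, y} = 2" using assms(3,4) by (auto simp: card_insert_if)
  ultimately show ?thesis using assms(2) by linarith
qed

lemma mix_path_if_card_symdiff_le_2:
  assumes "finite E" and A: "A \<in> mix_X E r1 r2" and B: "B \<in> mix_X E r1 r2"
    and "card (sym_diff A B) \<le> 2"
  shows "\<exists>P. mix_path E r1 r2 P A B"
proof (cases "A \<subseteq> B \<or> B \<subseteq> A")
  case True
  then consider "A = B" | "A \<subset> B" | "B \<subset> A" by blast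
  then show ?thesis
  proof cases
    case 1
    then show ?thesis using mix_path_singleton[OF A] by blast
  next
    case 2
    then show ?thesis using mix_path_edge[OF mix_edge_psubset(1)[OF A B]] by blast
  next
    case 3
    then show ?thesis using mix_path_edge[OF mix_edge_psubset(2)[OF A B]] by blast
  qed
next
  case False
  then obtain x y where x: "x \<in> A - B" and y: "y \<in> B - A" by blast
  then have "A \<noteq> B" by blast
  consider (inter) "A \<inter> B \<in> mix_X E r1 r2" | (union) "A \<union> B \<in> mix_X E r1 r2"
    | (neither) "A \<inter> B \<notin> mix_X E r1 r2" "A \<union> B \<notin> mix_X E r1 r2" by blast
  then show ?thesis
  proof cases
    case inter
    have "A \<inter> B \<subset> A" "A \<inter> B \<subset> B" using x y by blast+
    then have "mix_edge E r1 r2 A (A \<inter> B)" "mix_edge E r1 r2 (A \<inter> B) B"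
      using A B inter by (metis mix_edge_psubset)+
    then show ?thesis using mix_path_two_edges[OF \<open>A \<noteq> B\<close>] by blast
  next
    case union
    have "A \<subset> A \<union> B" "B \<subset> A \<union> B" using x y by blast+
    then have "mix_edge E r1 r2 A (A \<union> B)" "mix_edge E r1 r2 (A \<union> B) B"
      using A B union by (metis mix_edge_psubset)+
    then show ?thesis using mix_path_two_edges[OF \<open>A \<noteq> B\<close>] by blast
  next
    case neither
    have "sym_diff A B \<subseteq> E" using A B by (auto simp: mix_X_def)
    then have "finite (sym_diff A B)" using \<open>finite E\<close> by (rule finite_subset)
    then have "card (sym_diff A B) = 2"
      using \<open>card (sym_diff A B) \<le> 2\<close> x y by (rule card_symdiff_eq_2)
    then have "mix_edge E r1 r2 A B" using neither A B unfolding mix_edge_def by blast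
    then show ?thesis using mix_path_edge by blast
  qed
qed

theorem lemma3p7:
  fixes E :: "'a set" and r1 r2 :: "'a set \<Rightarrow> nat" and A B :: "'a set"
  assumes "matroid_rank E r1" and "matroid_rank E r2"
    and "A \<in> mix_X E r1 r2" and "B \<in> mix_X E r1 r2"
    and "card ((A - B) \<union> (B - A)) \<le> 2"
  shows "\<exists>P. mix_path E r1 r2 P A B"
proof -
  have "finite E" using assms(1) by (simp add: matroid_rank_def)
  then show ?thesis using assms(3-5) by (rule mix_path_if_card_symdiff_le_2)
qed

end
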